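(* Let $(V,E)$ be a finite graph and $p\in[0,1]$. Let $(\eta_t,\sigma_t)_{t\ge0}$ be a continuous-time Markov jump process on $\{0,1\}^E\times\{-1,1\}^V$ with the following rates: (a) if $\sigma'=\sigma$ and there is $e\in E$ with $\eta'=\eta^e$ and $\gamma_\eta(e)=1$, then $c((\eta,\sigma),(\eta',\sigma'))=\big((1-p)\mathbf 1_{\eta(e)=1}+p\mathbf 1_{\eta(e)=0}\big)\mathbf 1_{(\eta,\sigma)\in\mathcal C}$; (b) if $\sigma'=\sigma$ and there is $e\in E$ with $\eta'=\eta^e$, $\gamma_\eta(e)=0$ and $\delta_\sigma(e)=1$, then $c((\eta,\sigma),(\eta',\sigma'))=\frac12\big((1-p)\mathbf 1_{\eta(e)=1}+p\mathbf 1_{\eta(e)=0}\big)\mathbf 1_{(\eta,\sigma)\in\mathcal C}$; (c) if there are $x\in V$ and $e\in E_x$ with $\sigma'=\sigma^x$, $\eta'=\eta^e$, $\gamma_\eta(e)=0$, $\eta(e)=\delta_\sigma(e)$ and $\eta(f)=0$ for all $f\in E_x\setminus\{e\}$, then $c((\eta,\sigma),(\eta',\sigma'))=\frac14\big((1-p)\mathbf 1_{\eta(e)=1}\mathbf 1_{(\eta,\sigma)\in\mathcal C}+p\mathbf 1_{\eta(e)=0}\mathbf 1_{(\eta',\sigma')\in\mathcal C}\big)$; (d) all other off-diagonal rates are $0$. Suppose $(\eta_0,\sigma_0)$ is distributed according to $IP$. Then for every $x\in V$, $\sigma\in\{-1,1\}^V$ and $s\ge0$, $$\lim_{t\to0}\frac1t\,\mathbb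 P(\sigma_{t+s}=\sigma^x\mid\sigma_s=\sigma)=\frac14\,|E_x|\,p\,(1-p)^{|\{e\in E_x:\ \delta_\sigma(e)=1\}|}.$$
   Context: Edge configurations $\eta\in\{0,1\}^E$ (1 = open), spin configurations $\sigma\in\{-1,1\}^V$. For $e=\langle x,y\rangle$, $\delta_\sigma(e)=\mathbf 1_{\sigma(x)=\sigma(y)}$. $\mathcal C=\{(\eta,\sigma):\eta(e)\le\delta_\sigma(e)\ \forall e\in E\}$. $IP(\eta,\sigma)=\frac1Z\prod_{e\in E}\big(p\mathbf 1_{\eta(e)=1}\delta_\sigma(e)+(1-p)\mathbf 1_{\eta(e)=0}\big)$ with $Z$ the normalizing constant. $E_x$ is the set of edges with endvertex $x$; $\sigma^x$ is $\sigma$ with the spin at $x$ flipped; $\eta^e$ is $\eta$ with the value at $e$ changed. For $e=\langle x,y\rangle$, $\gamma_\eta(e)=1$ if $x,y$ are connected by a path of open edges of $\eta$ not using $e$, and $0$ otherwise. *)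

theory Defs
  imports "HOL-Probability.Probability"
begin

text \<open>Vertex set V = UNIV of a finite type 'v. Edges are 2-element sets of vertices.
 Edge configurations: functions eta :: 'v set => bool (True = open), equal to False off E.
 Spin configurations: sigma :: 'v => int with values in {-1,1}.\<close>

type_synonym 'v config = "('v set \<Rightarrow> bool) \<times> ('v \<Rightarrow> int)"

definition simple_graph :: "'v set set \<Rightarrow> bool" where
  "simple_graph E \<longleftrightarrow> (\<forall>e\<in>E. \<exists>x y. x \<noteq> y \<and> e = {x, y})"

definition incident :: "'v set set \<Rightarrow> 'v \<Rightarrow> 'v set set" where
  "incident E x = {e \<in> E. x \<in> e}"

text \<open>delta_sigma(e) = 1 iff the spins at the two endpoints agree.\<close>
definition agree :: "('v \<Rightarrow> int) \<Rightarrow> 'v set \<Rightarrow> bool" where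
  "agree \<sigma> e \<longleftrightarrow> (\<forall>x\<in>e. \<forall>y\<in>e. \<sigma> x = \<sigma> y)"

definition open_rel :: "'v set set \<Rightarrow> ('v set \<Rightarrow> bool) \<Rightarrow> 'v set \<Rightarrow> ('v \<times> 'v) set" where
  "open_rel E \<eta> e = {(u, w). \<exists>f\<in>E. f \<noteq> e \<and> \<eta> f \<and> f = {u, w}}"

definition gamma :: "'v set set \<Rightarrow> ('v set \<Rightarrow> bool) \<Rightarrow> 'v set \<Rightarrow> bool" where
  "gamma E \<eta> e \<longleftrightarrow> (\<exists>x y. e = {x, y} \<and> (x, y) \<in> (open_rel E \<eta> e)\<^sup>*)"

definition flipE :: "('v set \<Rightarrow> bool) \<Rightarrow> 'v set \<Rightarrow> ('v set \<Rightarrow> bool)" where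
  "flipE \<eta> e = \<eta>(e := \<not> \<eta> e)"

definition flipS :: "('v \<Rightarrow> int) \<Rightarrow> 'v \<Rightarrow> ('v \<Rightarrow> int)" where
  "flipS \<sigma> x = \<sigma>(x := - \<sigma> x)"

definition compat :: "'v set set \<Rightarrow> 'v config \<Rightarrow> bool" where
  "compat E c \<longleftrightarrow> (\<forall>e\<in>E. fst c e \<longrightarrow> agree (snd c) e)"

definition states :: "'v set set \<Rightarrow> 'v config set" where
  "states E = {(\<eta>, \<sigma>). (\<forall>f. \<eta> f \<longrightarrow> f \<in> E) \<and> (\<forall>x. \<sigma> x = 1 \<or> \<sigma> x = -1)}"

definition weight :: "'v set set \<Rightarrow> real \<Rightarrow> 'v config \<Rightarrow> real" where
  "weight E p c = (\<Prod>e\<in>E. (if fst c e then (if agree (snd c) e then p else 0) else 1 - p))"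

definition IP :: "'v set set \<Rightarrow> real \<Rightarrow> 'v config \<Rightarrow> real" where
  "IP E p c = (if c \<in> states E then weight E p c / (\<Sum>d\<in>states E. weight E p d) else 0)"

definition ind :: "bool \<Rightarrow> real" where
  "ind b = (if b then 1 else 0)"

definition rate :: "'v set set \<Rightarrow> real \<Rightarrow> 'v config \<Rightarrow> 'v config \<Rightarrow> real" where
  "rate E p c c' = (let \<eta> = fst c; \<sigma> = snd c; \<eta>' = fst c'; \<sigma>' = snd c' in
     if \<sigma>' = \<sigma> \<and> (\<exists>e\<in>E. \<eta>' = flipE \<eta> e \<and> gamma E \<eta> e) then
       (let e = (SOME e. e \<in> E \<and> \<eta>' = flipE \<eta> e \<and> gamma E \<eta> e) in
         ((1 - p) * ind (\<eta> e) + p * ind (\<not> \<eta> e)) * ind (compat E c))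
     else if \<sigma>' = \<sigma> \<and> (\<exists>e\<in>E. \<eta>' = flipE \<eta> e \<and> \<not> gamma E \<eta> e \<and> agree \<sigma> e) then
       (let e = (SOME e. e \<in> E \<and> \<eta>' = flipE \<eta> e \<and> \<not> gamma E \<eta> e \<and> agree \<sigma> e) in
         1/2 * ((1 - p) * ind (\<eta> e) + p * ind (\<not> \<eta> e)) * ind (compat E c))
     else if (\<exists>x. \<exists>e\<in>incident E x. \<sigma>' = flipS \<sigma> x \<and> \<eta>' = flipE \<eta> e \<and> \<not> gamma E \<eta> e
                \<and> \<eta> e = agree \<sigma> e \<and> (\<forall>f\<in>incident E x - {e}. \<not> \<eta> f)) then
       (let xe = (SOME (x, e). e \<in> incident E x \<and> \<sigma>' = flipS \<sigma> x \<and> \<eta>' = flipE \<eta> e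
                \<and> \<not> gamma E \<eta> e \<and> \<eta> e = agree \<sigma> e \<and> (\<forall>f\<in>incident E x - {e}. \<not> \<eta> f));
            e = snd xe in
         1/4 * ((1 - p) * ind (\<eta> e) * ind (compat E c) + p * ind (\<not> \<eta> e) * ind (compat E c')))
     else 0)"

definition Qgen :: "'v set set \<Rightarrow> real \<Rightarrow> 'v config \<Rightarrow> 'v config \<Rightarrow> real" where
  "Qgen E p c c' = (if c = c' then - (\<Sum>d\<in>states E - {c}. rate E p c d) else rate E p c c')"

fun Qpow :: "'v set set \<Rightarrow> real \<Rightarrow> nat \<Rightarrow> 'v config \<Rightarrow> 'v config \<Rightarrow> real" where
  "Qpow E p 0 c c' = (if c = c' then 1 else 0)"
| "Qpow E p (Suc n) c c' = (\<Sum>d\<in>states E. Qpow E p n c d * Qgen E p d c')"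

definition Pt :: "'v set set \<Rightarrow> real \<Rightarrow> real \<Rightarrow> 'v config \<Rightarrow> 'v config \<Rightarrow> real" where
  "Pt E p t c c' = (\<Sum>n. t ^ n / fact n * Qpow E p n c c')"

end

theory Submission
  imports Defs
begin

(*
  IP is reversible for the dynamics: IP(c) c(c, c') = IP(c') c(c', c) for all configurations.
  Only bond updates and spin flips at x along an edge e (with all other edges at x closed) have
  positive rate, and for both kinds detailed balance reduces to a check on the single edge e,
  the weights of all other edges being unchanged. Hence IP is stationary for the generator Q and
  for P_t = exp(tQ), so P(sigma_s = sigma, sigma_(t+s) = sigma^x) is the IP-average over eta of
  P_t((eta, sigma), (eta', sigma^x)), and dividing by t and letting t -> 0 replaces P_t by Q.

  Under IP the edge variables are independent given sigma. The flip at x along e has rate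
  (1-p)/4 if e agrees and is the only open edge at x, and p/4 if e disagrees and no edge at x
  is open; either way its IP-flow is p (1-p)^|E_x| / 4 times the mass of the edges away from x.
  The sigma-marginal carries (1-p)^(|E_x| - #agreeing edges) times the same mass, and the
  quotient is the claimed rate.
*)

section \<open>Flips and open paths\<close>

lemma flipE_inject [simp]: "flipE \<eta> e = flipE \<eta> e' \<longleftrightarrow> e = e'"
  unfolding flipE_def by (metis fun_upd_apply)

lemma flipS_inject: "\<sigma> x \<noteq> 0 \<Longrightarrow> flipS \<sigma> x = flipS \<sigma> x' \<longleftrightarrow> x = x'"
  unfolding flipS_def by (metis fun_upd_apply neg_equal_zero)

lemma flipS_neq: "\<sigma> x \<noteq> 0 \<Longrightarrow> flipS \<sigma> x \<noteq> \<sigma>"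
  unfolding flipS_def by (metis fun_upd_same neg_equal_zero)

lemma flipE_flipE [simp]: "flipE (flipE \<eta> e) e = \<eta>"
  unfolding flipE_def by auto

lemma flipS_flipS [simp]: "flipS (flipS \<sigma> x) x = \<sigma>"
  unfolding flipS_def by auto

lemma gamma_flipE [simp]: "gamma E (flipE \<eta> e) e = gamma E \<eta> e"
proof -
  have "open_rel E (flipE \<eta> e) e = open_rel E \<eta> e"
    unfolding open_rel_def flipE_def by auto
  then show ?thesis unfolding gamma_def by simp
qed

lemma agree_doubleton: "agree \<sigma> {u, w} \<longleftrightarrow> \<sigma> u = \<sigma> w"
  unfolding agree_def by auto

lemma agree_flipS_notin: "x \<notin> f \<Longrightarrow> agree (flipS \<sigma> x) f = agree \<sigma> f"
  unfolding agree_def flipS_def by auto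

lemma agree_flipS_doubleton:
  assumes "x \<noteq> y" "\<sigma> x = 1 \<or> \<sigma> x = -1" "\<sigma> y = 1 \<or> \<sigma> y = -1"
  shows "agree (flipS \<sigma> x) {x, y} \<longleftrightarrow> \<not> agree \<sigma> {x, y}"
  using assms unfolding agree_doubleton flipS_def by auto

lemma compat_open_path_agree:
  assumes "(u, w) \<in> (open_rel E \<eta> e)\<^sup>*" and "compat E (\<eta>, \<sigma>)"
  shows "\<sigma> u = \<sigma> w"
  using assms(1)
proof (induction rule: rtrancl_induct)
  case (step y z)
  then have "\<sigma> y = \<sigma> z"
    using assms(2) unfolding open_rel_def compat_def by (auto simp: agree_doubleton)
  with step show ?case by simp
qed simp

lemma gamma_imp_agree: "gamma E \<eta> e \<Longrightarrow> compat E (\<eta>, \<sigma>) \<Longrightarrow> agree \<sigma> e"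
  unfolding gamma_def using compat_open_path_agree by (metis agree_doubleton)

text \<open>An open path avoiding \<open>e = {x, y}\<close> would have to leave \<open>x\<close> through another open edge.\<close>
lemma not_gamma_if_isolated:
  assumes "e = {x, y}" "x \<noteq> y" "\<forall>f\<in>incident E x - {e}. \<not> \<eta> f"
  shows "\<not> gamma E \<eta> e"
proof
  assume "gamma E \<eta> e"
  then obtain u w where uw: "e = {u, w}" "(u, w) \<in> (open_rel E \<eta> e)\<^sup>*"
    unfolding gamma_def by auto
  have no_step: "(x, z) \<notin> open_rel E \<eta> e" "(z, x) \<notin> open_rel E \<eta> e" for z
    using assms(3) unfolding open_rel_def incident_def by auto
  from uw(1) assms(1,2) have "u = x \<and> w = y \<or> u = y \<and> w = x"
    by (auto simp: doubleton_eq_iff)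
  then show False
    using uw(2) assms(2) no_step by (metis converse_rtranclE rtranclE)
qed

section \<open>Jump rates and detailed balance\<close>

definition bond_rate :: "real \<Rightarrow> bool \<Rightarrow> real" where
  "bond_rate p b = (if b then 1 - p else p)"

lemma bond_rate_eq: "(1 - p) * ind b + p * ind (\<not> b) = bond_rate p b"
  by (simp add: ind_def bond_rate_def)

lemma rate_flipE:
  assumes e: "e \<in> E" and spins: "\<forall>v. \<sigma> v \<noteq> 0"
  shows "rate E p (\<eta>, \<sigma>) (flipE \<eta> e, \<sigma>) =
     (if gamma E \<eta> e then bond_rate p (\<eta> e) * ind (compat E (\<eta>, \<sigma>))
      else if agree \<sigma> e then 1/2 * bond_rate p (\<eta> e) * ind (compat E (\<eta>, \<sigma>)) else 0)"
proof -
  have "(SOME e'. e' \<in> E \<and> flipE \<eta> e = flipE \<eta> e' \<and> P e') = e" if "P e" for P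
    using that e by (intro some_equality) auto
  moreover have "\<sigma> \<noteq> flipS \<sigma> x" for x
    using flipS_neq spins by metis
  ultimately show ?thesis
    using e unfolding rate_def Let_def by (auto simp: bond_rate_def ind_def)
qed

lemma rate_flip_spin:
  assumes e: "e \<in> incident E x" and spins: "\<forall>v. \<sigma> v \<noteq> 0"
  shows "rate E p (\<eta>, \<sigma>) (flipE \<eta> e, flipS \<sigma> x) =
     (if \<not> gamma E \<eta> e \<and> \<eta> e = agree \<sigma> e \<and> (\<forall>f\<in>incident E x - {e}. \<not> \<eta> f)
      then 1/4 * ((1 - p) * ind (\<eta> e) * ind (compat E (\<eta>, \<sigma>))
                 + p * ind (\<not> \<eta> e) * ind (compat E (flipE \<eta> e, flipS \<sigma> x)))
      else 0)"
proof -
  have uniq: "(SOME (x', e'). e' \<in> incident E x' \<and> flipS \<sigma> x = flipS \<sigma> x'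
                \<and> flipE \<eta> e = flipE \<eta> e' \<and> P x' e') = (x, e)" if "P x e" for P
    using that e flipS_inject[of \<sigma> x] spins by (intro some_equality) auto
  have "flipS \<sigma> x \<noteq> \<sigma>"
    using flipS_neq spins by metis
  then show ?thesis
    using e uniq flipS_inject[of \<sigma> x] spins unfolding rate_def Let_def by auto
qed

definition adjacent :: "'v set set \<Rightarrow> 'v config \<Rightarrow> 'v config \<Rightarrow> bool" where
  "adjacent E c c' \<longleftrightarrow> (snd c' = snd c \<and> (\<exists>e\<in>E. fst c' = flipE (fst c) e))
       \<or> (\<exists>x. \<exists>e\<in>incident E x. snd c' = flipS (snd c) x \<and> fst c' = flipE (fst c) e)"

lemma rate_nonzero_imp_adjacent: "rate E p c c' \<noteq> 0 \<Longrightarrow> adjacent E c c'"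
  unfolding rate_def adjacent_def Let_def by (auto split: if_splits)

lemma adjacent_sym: "adjacent E c c' \<Longrightarrow> adjacent E c' c"
  unfolding adjacent_def by (metis flipE_flipE flipS_flipS)

lemma adjacent_states:
  assumes "adjacent E c c'" "c \<in> states E"
  shows "c' \<in> states E"
proof -
  have "\<forall>f. fst c' f \<longrightarrow> f \<in> E"
    using assms unfolding adjacent_def states_def incident_def flipE_def
    by (auto split: if_splits)
  moreover have "\<forall>v. snd c' v = 1 \<or> snd c' v = -1"
    using assms unfolding adjacent_def states_def flipS_def by (cases c) force
  ultimately show ?thesis
    unfolding states_def by (cases c') simp
qed

definition bond_weight :: "real \<Rightarrow> ('v \<Rightarrow> int) \<Rightarrow> 'v set \<Rightarrow> bool \<Rightarrow> real" where
  "bond_weight p \<sigma> e b = (if b then (if agree \<sigma> e then p else 0) else 1 - p)"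

definition bond_mass :: "real \<Rightarrow> ('v \<Rightarrow> int) \<Rightarrow> 'v set \<Rightarrow> real" where
  "bond_mass p \<sigma> e = bond_weight p \<sigma> e True + bond_weight p \<sigma> e False"

lemma weight_eq_prod: "weight E p (\<eta>, \<sigma>) = (\<Prod>f\<in>E. bond_weight p \<sigma> f (\<eta> f))"
  unfolding weight_def bond_weight_def by (simp only: fst_conv snd_conv)

lemma weight_remove:
  fixes E :: "'v::finite set set"
  assumes "e \<in> E"
  shows "weight E p (\<eta>, \<sigma>) = bond_weight p \<sigma> e (\<eta> e) * (\<Prod>f\<in>E-{e}. bond_weight p \<sigma> f (\<eta> f))"
  unfolding weight_eq_prod using assms by (simp add: prod.remove)

lemma weight_flipE_remove:
  fixes E :: "'v::finite set set"
  assumes "e \<in> E"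
  shows "weight E p (flipE \<eta> e, \<sigma>) =
    bond_weight p \<sigma> e (\<not> \<eta> e) * (\<Prod>f\<in>E-{e}. bond_weight p \<sigma> f (\<eta> f))"
  unfolding weight_remove[OF assms] by (simp add: flipE_def)

lemma weight_eq_0_if_not_compat:
  fixes E :: "'v::finite set set"
  assumes "\<not> compat E (\<eta>, \<sigma>)"
  shows "weight E p (\<eta>, \<sigma>) = 0"
proof -
  from assms obtain e where "e \<in> E" "\<eta> e" "\<not> agree \<sigma> e"
    unfolding compat_def by auto
  then show ?thesis
    unfolding weight_eq_prod by (intro prod_zero) (auto simp: bond_weight_def)
qed

lemma detailed_balance_flipE:
  fixes E :: "'v::finite set set"
  assumes e: "e \<in> E" and e_closed: "\<not> \<eta> e" and spins: "\<forall>v. \<sigma> v \<noteq> 0"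
  shows "weight E p (\<eta>, \<sigma>) * rate E p (\<eta>, \<sigma>) (flipE \<eta> e, \<sigma>)
       = weight E p (flipE \<eta> e, \<sigma>) * rate E p (flipE \<eta> e, \<sigma>) (\<eta>, \<sigma>)"
proof -
  have reverse: "rate E p (flipE \<eta> e, \<sigma>) (\<eta>, \<sigma>)
      = rate E p (flipE \<eta> e, \<sigma>) (flipE (flipE \<eta> e) e, \<sigma>)"
    by simp
  have "flipE \<eta> e e" using e_closed by (simp add: flipE_def)
  moreover have "compat E (flipE \<eta> e, \<sigma>) \<longleftrightarrow> compat E (\<eta>, \<sigma>) \<and> agree \<sigma> e"
    using e e_closed unfolding compat_def flipE_def by auto
  ultimately show ?thesis
    using e_closed gamma_imp_agree[of E \<eta> e \<sigma>]
    unfolding reverse rate_flipE[OF e spins] weight_flipE_remove[OF e] weight_remove[OF e, of p \<eta>]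
    by (auto simp: bond_rate_def bond_weight_def ind_def)
qed

lemma detailed_balance_flip_spin:
  fixes E :: "'v::finite set set"
  assumes graph: "simple_graph E" and e: "e \<in> incident E x" and e_closed: "\<not> \<eta> e"
    and spins: "\<forall>v. \<sigma> v = 1 \<or> \<sigma> v = -1"
  shows "weight E p (\<eta>, \<sigma>) * rate E p (\<eta>, \<sigma>) (flipE \<eta> e, flipS \<sigma> x)
       = weight E p (flipE \<eta> e, flipS \<sigma> x) * rate E p (flipE \<eta> e, flipS \<sigma> x) (\<eta>, \<sigma>)"
proof -
  define \<sigma>' where "\<sigma>' = flipS \<sigma> x"
  have eE: "e \<in> E" using e unfolding incident_def by auto
  obtain y where y: "e = {x, y}" "x \<noteq> y"
    using e graph unfolding incident_def simple_graph_def by (auto simp: doubleton_eq_iff)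
  have spins0: "\<forall>v. \<sigma> v \<noteq> 0" "\<forall>v. \<sigma>' v \<noteq> 0"
    using spins unfolding \<sigma>'_def flipS_def
    by (metis fun_upd_apply neg_equal_0_iff_equal zero_neq_neg_one zero_neq_one)+
  have agree_e: "agree \<sigma>' e \<longleftrightarrow> \<not> agree \<sigma> e"
    unfolding \<sigma>'_def y using y spins by (intro agree_flipS_doubleton) auto
  have reverse: "rate E p (flipE \<eta> e, \<sigma>') (\<eta>, \<sigma>)
      = rate E p (flipE \<eta> e, \<sigma>') (flipE (flipE \<eta> e) e, flipS \<sigma>' x)"
    by (simp add: \<sigma>'_def)
  have others: "(\<forall>f\<in>incident E x - {e}. \<not> flipE \<eta> e f) \<longleftrightarrow> (\<forall>f\<in>incident E x - {e}. \<not> \<eta> f)"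
    by (auto simp: flipE_def)
  have rest: "(\<Prod>f\<in>E-{e}. bond_weight p \<sigma> f (\<eta> f)) = (\<Prod>f\<in>E-{e}. bond_weight p \<sigma>' f (\<eta> f))"
    if "\<forall>f\<in>incident E x - {e}. \<not> \<eta> f"
  proof (intro prod.cong refl)
    fix f assume "f \<in> E - {e}"
    then have "\<eta> f \<Longrightarrow> x \<notin> f" using that unfolding incident_def by auto
    then show "bond_weight p \<sigma> f (\<eta> f) = bond_weight p \<sigma>' f (\<eta> f)"
      unfolding \<sigma>'_def bond_weight_def by (auto simp: agree_flipS_notin)
  qed
  show ?thesis
    unfolding \<sigma>'_def[symmetric] reverse rate_flip_spin[OF e spins0(1), folded \<sigma>'_def]
      rate_flip_spin[OF e spins0(2)] weight_flipE_remove[OF eE] weight_remove[OF eE, of p \<eta>] others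
    using e_closed agree_e rest fun_cong[OF flipE_def[of \<eta> e], of e]
    by (auto simp: bond_weight_def ind_def)
qed

lemma weight_detailed_balance:
  fixes E :: "'v::finite set set"
  assumes graph: "simple_graph E" and adj: "adjacent E c c'"
    and spins: "\<forall>v. snd c v = 1 \<or> snd c v = -1"
  shows "weight E p c * rate E p c c' = weight E p c' * rate E p c' c"
proof -
  obtain \<eta> \<sigma> where c: "c = (\<eta>, \<sigma>)" by fastforce
  have spins0: "\<forall>v. \<sigma> v \<noteq> 0" using spins unfolding c by (metis snd_conv zero_neq_neg_one zero_neq_one)
  from adj consider (edge) e where "e \<in> E" "c' = (flipE \<eta> e, \<sigma>)"
    | (spin) x e where "e \<in> incident E x" "c' = (flipE \<eta> e, flipS \<sigma> x)"
    unfolding adjacent_def c by (metis prod.collapse fst_conv snd_conv)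
  then show ?thesis
  proof cases
    case edge
    show ?thesis
    proof (cases "\<eta> e")
      case False
      then show ?thesis using detailed_balance_flipE[OF edge(1) _ spins0] edge c by simp
    next
      case True
      then have "\<not> flipE \<eta> e e" by (simp add: flipE_def)
      then show ?thesis
        using detailed_balance_flipE[OF edge(1) _ spins0, of "flipE \<eta> e"] edge c by simp
    qed
  next
    case spin
    have spins': "\<forall>v. flipS \<sigma> x v = 1 \<or> flipS \<sigma> x v = -1"
      using spins c unfolding flipS_def by auto
    show ?thesis
    proof (cases "\<eta> e")
      case False
      then show ?thesis
        using detailed_balance_flip_spin[OF graph spin(1) _] spins spin c by simp
    next
      case True
      then have "\<not> flipE \<eta> e e" by (simp add: flipE_def)
      then show ?thesis
        using detailed_balance_flip_spin[OF graph spin(1) _ spins', of "flipE \<eta> e"] spin c by simp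
    qed
  qed
qed

lemma IP_detailed_balance:
  fixes E :: "'v::finite set set"
  assumes "simple_graph E"
  shows "IP E p c * rate E p c c' = IP E p c' * rate E p c' c"
proof (cases "adjacent E c c' \<and> c \<in> states E")
  case True
  then have "c' \<in> states E" using adjacent_states by blast
  then show ?thesis
    using True weight_detailed_balance[OF assms, of c c' p]
    unfolding IP_def states_def by (auto simp: case_prod_beta)
next
  case False
  have "IP E p c * rate E p c c' = 0"
    using False rate_nonzero_imp_adjacent[of E p c c'] by (auto simp: IP_def)
  moreover have "IP E p c' * rate E p c' c = 0"
    using False rate_nonzero_imp_adjacent[of E p c' c] adjacent_sym adjacent_states
    by (fastforce simp: IP_def)
  ultimately show ?thesis by linarith
qed

section \<open>Stationarity of IP\<close>

lemma finite_states: "finite (states (E :: 'v::finite set set))"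
proof -
  have "states E \<subseteq> UNIV \<times> (UNIV \<rightarrow>\<^sub>E {1, -1})"
    unfolding states_def by auto
  then show ?thesis
    by (rule finite_subset) (simp add: finite_PiE)
qed

lemma IP_Qgen_stationary:
  fixes E :: "'v::finite set set"
  assumes "simple_graph E"
  shows "(\<Sum>c\<in>states E. IP E p c * Qgen E p c c') = 0"
proof -
  have out_flow: "(\<Sum>c\<in>states E - {c'}. IP E p c * rate E p c c')
      = IP E p c' * (\<Sum>d\<in>states E - {c'}. rate E p c' d)"
    unfolding sum_distrib_left using IP_detailed_balance[OF assms] by (intro sum.cong) auto
  show ?thesis
  proof (cases "c' \<in> states E")
    case True
    then show ?thesis
      using finite_states[of E] out_flow by (simp add: sum.remove Qgen_def)
  next
    case False
    then have "(\<Sum>c\<in>states E. IP E p c * Qgen E p c c') = (\<Sum>c\<in>states E - {c'}. IP E p c * rate E p c c')"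
      by (intro sum.cong) (auto simp: Qgen_def)
    with False out_flow show ?thesis by (simp add: IP_def)
  qed
qed

lemma IP_Qpow_stationary:
  fixes E :: "'v::finite set set"
  assumes "simple_graph E"
  shows "(\<Sum>c\<in>states E. IP E p c * Qpow E p n c c') = (if n = 0 then IP E p c' else 0)"
proof (induction n arbitrary: c')
  case 0
  show ?case
    using finite_states[of E] by (cases "c' \<in> states E") (auto simp: IP_def if_distrib cong: if_cong)
next
  case (Suc n)
  have "(\<Sum>c\<in>states E. IP E p c * Qpow E p (Suc n) c c')
      = (\<Sum>d\<in>states E. (\<Sum>c\<in>states E. IP E p c * Qpow E p n c d) * Qgen E p d c')"
    unfolding Qpow.simps sum_distrib_left sum_distrib_right mult.assoc
    by (rule sum.swap)
  then show ?case
    using Suc.IH IP_Qgen_stationary[OF assms, of p c'] by (cases "n = 0") simp_all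
qed

lemma rate_in_unit_interval:
  assumes "0 \<le> p" "p \<le> 1"
  shows "rate E p c c' \<in> {0..1}"
proof -
  have edge: "bond_rate p a * ind b \<in> {0..1}" for a b
    using assms by (auto simp: ind_def bond_rate_def)
  then have half_edge: "1/2 * bond_rate p a * ind b \<in> {0..1}" for a b
    by (fastforce simp: mult.assoc)
  have spin: "1/4 * ((1 - p) * ind a * ind b + p * ind (\<not> a) * ind d) \<in> {0..1}" for a b d
    using assms by (auto simp: ind_def)
  show ?thesis
    unfolding rate_def Let_def bond_rate_eq
    by (simp only: split: if_split) (intro conjI impI edge half_edge spin; simp)
qed

lemma abs_Qgen_le:
  fixes E :: "'v::finite set set"
  assumes "0 \<le> p" "p \<le> 1"
  shows "\<bar>Qgen E p c c'\<bar> \<le> real (card (states E)) + 1"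
proof (cases "c = c'")
  case True
  have "(\<Sum>d\<in>states E - {c}. rate E p c d) \<le> (\<Sum>d\<in>states E - {c}. 1)"
    using rate_in_unit_interval[OF assms, of E c] by (intro sum_mono) auto
  also have "\<dots> = real (card (states E - {c}))"
    by simp
  also have "\<dots> \<le> real (card (states E))"
    using card_Diff1_le[of "states E" c] by simp
  finally show ?thesis
    using True sum_nonneg[of "states E - {c}" "rate E p c"] rate_in_unit_interval[OF assms, of E c]
    by (simp add: Qgen_def)
next
  case False
  then show ?thesis using rate_in_unit_interval[OF assms, of E c c'] by (simp add: Qgen_def)
qed

lemma abs_Qpow_le:
  fixes E :: "'v::finite set set"
  assumes "0 \<le> p" "p \<le> 1"
  shows "\<bar>Qpow E p n c c'\<bar> \<le> (real (card (states E)) * (real (card (states E)) + 1)) ^ n"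
proof (induction n arbitrary: c')
  case (Suc n)
  define N where "N = real (card (states E))"
  have "\<bar>Qpow E p (Suc n) c c'\<bar> \<le> (\<Sum>d\<in>states E. \<bar>Qpow E p n c d\<bar> * \<bar>Qgen E p d c'\<bar>)"
    unfolding Qpow.simps abs_mult[symmetric] by (rule sum_abs)
  also have "\<dots> \<le> (\<Sum>d\<in>states E. (N * (N + 1)) ^ n * (N + 1))"
    unfolding N_def by (intro sum_mono mult_mono Suc.IH abs_Qgen_le[OF assms]) auto
  also have "\<dots> = (N * (N + 1)) ^ Suc n"
    by (simp add: N_def)
  finally show ?case unfolding N_def .
qed simp

lemma Pt_eq_powser: "Pt E p t c c' = (\<Sum>n. Qpow E p n c c' / fact n * t ^ n)"
  unfolding Pt_def by (simp add: field_simps)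

lemma summable_Pt_powser:
  fixes E :: "'v::finite set set"
  assumes "0 \<le> p" "p \<le> 1"
  shows "summable (\<lambda>n. Qpow E p n c c' / fact n * t ^ n)"
proof (rule summable_comparison_test')
  define B where "B = real (card (states E)) * (real (card (states E)) + 1)"
  show "summable (\<lambda>n. inverse (fact n) * (B * \<bar>t\<bar>) ^ n)"
    by (rule summable_exp)
  fix n
  have "norm (Qpow E p n c c' / fact n * t ^ n) = \<bar>Qpow E p n c c'\<bar> * \<bar>t\<bar> ^ n / fact n"
    by (simp add: abs_mult power_abs)
  also have "\<dots> \<le> B ^ n * \<bar>t\<bar> ^ n / fact n"
    unfolding B_def by (intro divide_right_mono mult_right_mono abs_Qpow_le[OF assms]) auto
  also have "\<dots> = inverse (fact n) * (B * \<bar>t\<bar>) ^ n"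
    by (simp add: power_mult_distrib divide_inverse)
  finally show "norm (Qpow E p n c c' / fact n * t ^ n) \<le> inverse (fact n) * (B * \<bar>t\<bar>) ^ n" .
qed

lemma IP_Pt_stationary:
  fixes E :: "'v::finite set set"
  assumes "simple_graph E" "0 \<le> p" "p \<le> 1"
  shows "(\<Sum>c\<in>states E. IP E p c * Pt E p t c c') = IP E p c'"
proof -
  have "(\<Sum>c\<in>states E. IP E p c * Pt E p t c c')
      = (\<Sum>n. \<Sum>c\<in>states E. IP E p c * (Qpow E p n c c' / fact n * t ^ n))"
    unfolding Pt_eq_powser
    by (simp only: suminf_mult[OF summable_Pt_powser[OF assms(2,3)], symmetric]
        suminf_sum[OF summable_mult[OF summable_Pt_powser[OF assms(2,3)]]])
  also have "\<dots> = (\<Sum>n. (\<Sum>c\<in>states E. IP E p c * Qpow E p n c c') / fact n * t ^ n)"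
    by (simp add: sum_distrib_right sum_divide_distrib mult.assoc)
  also have "\<dots> = (\<Sum>n. if n = 0 then IP E p c' else 0)"
    unfolding IP_Qpow_stationary[OF assms(1)] by (intro suminf_cong) simp
  also have "\<dots> = IP E p c'"
    by (rule sums_unique[symmetric]) (rule sums_single)
  finally show ?thesis .
qed

lemma Pt_div_tendsto:
  fixes E :: "'v::finite set set"
  assumes "0 \<le> p" "p \<le> 1" "c \<noteq> c'"
  shows "((\<lambda>t. Pt E p t c c' / t) \<longlongrightarrow> Qpow E p 1 c c') (at 0)"
proof -
  define a where "a n = Qpow E p n c c' / fact n" for n
  have "((\<lambda>t. \<Sum>n. a n * t ^ n) has_field_derivative (\<Sum>n. diffs a n * 0 ^ n)) (at 0)"
    unfolding a_def by (intro termdiffs_strong_converges_everywhere summable_Pt_powser assms)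
  moreover have "(\<Sum>n. diffs a n * 0 ^ n) = Qpow E p 1 c c'"
    unfolding powser_zero by (simp add: diffs_def a_def)
  moreover have "(\<lambda>t. \<Sum>n. a n * t ^ n) = (\<lambda>t. Pt E p t c c')"
    unfolding a_def Pt_eq_powser ..
  moreover have "Pt E p 0 c c' = 0"
    unfolding Pt_eq_powser using assms(3) powser_zero[of "\<lambda>n. Qpow E p n c c' / fact n"] by simp
  ultimately have "((\<lambda>t. (Pt E p t c c' - 0) / (t - 0)) \<longlongrightarrow> Qpow E p 1 c c') (at 0)"
    unfolding has_field_derivative_iff by metis
  then show ?thesis by simp
qed

lemma IP_mult_Qpow_1:
  fixes E :: "'v::finite set set"
  shows "IP E p c * Qpow E p 1 c c' = IP E p c * Qgen E p c c'"
proof (cases "c \<in> states E")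
  case True
  have "Qpow E p 1 c c' = (\<Sum>d\<in>states E. if c = d then Qgen E p d c' else 0)"
    by (auto intro: sum.cong)
  with True show ?thesis by (simp add: finite_states)
qed (simp add: IP_def)

section \<open>The spin-flip flow under IP\<close>

definition edge_configs :: "'a set \<Rightarrow> ('a \<Rightarrow> bool) set" where
  "edge_configs E = {\<eta>. \<forall>f. \<eta> f \<longrightarrow> f \<in> E}"

lemma sum_edge_configs_prod:
  fixes g :: "'a \<Rightarrow> bool \<Rightarrow> 'b::comm_semiring_1"
  assumes "finite E"
  shows "(\<Sum>\<eta>\<in>edge_configs E. \<Prod>f\<in>E. g f (\<eta> f)) = (\<Prod>f\<in>E. g f True + g f False)"
proof -
  have "(\<Prod>f\<in>E. g f True + g f False) = (\<Prod>f\<in>E. \<Sum>b\<in>UNIV. g f b)"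
    by (simp add: UNIV_bool add.commute)
  also have "\<dots> = (\<Sum>h\<in>E \<rightarrow>\<^sub>E UNIV. \<Prod>f\<in>E. g f (h f))"
    using assms by (intro prod_sum_PiE) auto
  also have "\<dots> = (\<Sum>\<eta>\<in>edge_configs E. \<Prod>f\<in>E. g f (\<eta> f))"
    by (rule sum.reindex_bij_witness[of _ "\<lambda>\<eta>. restrict \<eta> E" "\<lambda>h f. f \<in> E \<and> h f"])
       (auto simp: edge_configs_def PiE_def extensional_def restrict_def)
  finally show ?thesis ..
qed

lemma sum_edge_configs_prod_fixed:
  fixes g :: "'a \<Rightarrow> bool \<Rightarrow> real"
  assumes "finite E" "A \<subseteq> E"
  shows "(\<Sum>\<eta>\<in>edge_configs E. (\<Prod>f\<in>E. g f (\<eta> f)) * ind (\<forall>f\<in>A. \<eta> f = b f))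
       = (\<Prod>f\<in>A. g f (b f)) * (\<Prod>f\<in>E - A. g f True + g f False)"
proof -
  define g' where "g' f v = g f v * (if f \<in> A then ind (v = b f) else 1)" for f v
  have "(\<Prod>f\<in>E. g' f (\<eta> f)) = (\<Prod>f\<in>E. g f (\<eta> f)) * ind (\<forall>f\<in>A. \<eta> f = b f)" for \<eta>
  proof -
    have "(\<Prod>f\<in>E. if f \<in> A then ind (\<eta> f = b f) else 1) = (\<Prod>f\<in>A. ind (\<eta> f = b f))"
      using assms by (simp add: prod.If_cases Int_absorb1)
    also have "\<dots> = ind (\<forall>f\<in>A. \<eta> f = b f)"
      using finite_subset[OF assms(2,1)] by (induction A rule: finite_induct) (auto simp: ind_def)
    finally show ?thesis
      unfolding g'_def prod.distrib by simp
  qed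
  then have "(\<Sum>\<eta>\<in>edge_configs E. (\<Prod>f\<in>E. g f (\<eta> f)) * ind (\<forall>f\<in>A. \<eta> f = b f))
      = (\<Prod>f\<in>E. g' f True + g' f False)"
    using sum_edge_configs_prod[OF assms(1), of g'] by simp
  also have "\<dots> = (\<Prod>f\<in>E. if f \<in> A then g f (b f) else g f True + g f False)"
    by (intro prod.cong) (auto simp: g'_def ind_def)
  also have "\<dots> = (\<Prod>f\<in>A. g f (b f)) * (\<Prod>f\<in>E - A. g f True + g f False)"
    using assms by (simp add: prod.If_cases Int_absorb1 Diff_eq)
  finally show ?thesis .
qed

lemma compat_flip_spin:
  assumes c: "compat E (\<eta>, \<sigma>)" and e: "e = {x, y}" "x \<noteq> y"
    and others: "\<forall>f\<in>incident E x - {e}. \<not> \<eta> f" and disagree: "\<not> agree \<sigma> e"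
    and spins: "\<forall>v. \<sigma> v = 1 \<or> \<sigma> v = -1"
  shows "compat E (flipE \<eta> e, flipS \<sigma> x)"
  unfolding compat_def fst_conv snd_conv
proof (intro ballI impI)
  fix f assume f: "f \<in> E" "flipE \<eta> e f"
  show "agree (flipS \<sigma> x) f"
  proof (cases "f = e")
    case True
    then show ?thesis using agree_flipS_doubleton[of x y \<sigma>] e disagree spins by simp
  next
    case False
    then have "\<eta> f" using f by (simp add: flipE_def)
    then have "x \<notin> f" "agree \<sigma> f"
      using others c f(1) False unfolding incident_def compat_def by auto
    then show ?thesis by (simp add: agree_flipS_notin)
  qed
qed

lemma weight_mult_rate_flip_spin:
  fixes E :: "'v::finite set set"
  assumes graph: "simple_graph E" and e: "e \<in> incident E x"
    and spins: "\<forall>v. \<sigma> v = 1 \<or> \<sigma> v = -1"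
  shows "weight E p (\<eta>, \<sigma>) * rate E p (\<eta>, \<sigma>) (flipE \<eta> e, flipS \<sigma> x)
    = weight E p (\<eta>, \<sigma>) * (if agree \<sigma> e
        then 1/4 * (1 - p) * ind (\<forall>f\<in>incident E x. \<eta> f = (f = e))
        else 1/4 * p * ind (\<forall>f\<in>incident E x. \<not> \<eta> f))"
proof (cases "compat E (\<eta>, \<sigma>)")
  case True
  obtain y where y: "e = {x, y}" "x \<noteq> y"
    using e graph unfolding incident_def simple_graph_def by (auto simp: doubleton_eq_iff)
  have spins0: "\<forall>v. \<sigma> v \<noteq> 0" using spins by (metis zero_neq_neg_one zero_neq_one)
  have "(\<not> gamma E \<eta> e \<and> \<eta> e = agree \<sigma> e \<and> (\<forall>f\<in>incident E x - {e}. \<not> \<eta> f))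
      \<longleftrightarrow> (if agree \<sigma> e then \<forall>f\<in>incident E x. \<eta> f = (f = e) else \<forall>f\<in>incident E x. \<not> \<eta> f)"
    using not_gamma_if_isolated[OF y] e by auto
  moreover have "compat E (flipE \<eta> e, flipS \<sigma> x)"
    if "\<not> agree \<sigma> e" "\<forall>f\<in>incident E x. \<not> \<eta> f"
    using compat_flip_spin[OF True y _ that(1) spins] that(2) by simp
  ultimately show ?thesis
    unfolding rate_flip_spin[OF e spins0] using True e by (auto simp: ind_def)
qed (simp add: weight_eq_0_if_not_compat)

lemma sum_weight_mult_rate_flip_spin:
  fixes E :: "'v::finite set set"
  assumes graph: "simple_graph E" and e: "e \<in> incident E x"
    and spins: "\<forall>v. \<sigma> v = 1 \<or> \<sigma> v = -1"
  shows "(\<Sum>\<eta>\<in>edge_configs E. weight E p (\<eta>, \<sigma>) * rate E p (\<eta>, \<sigma>) (flipE \<eta> e, flipS \<sigma> x))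
       = 1/4 * p * (1 - p) ^ card (incident E x)
         * (\<Prod>f\<in>E - incident E x. bond_mass p \<sigma> f)"
proof -
  define R where "R = (\<Prod>f\<in>E - incident E x. bond_mass p \<sigma> f)"
  define b where "b f = (agree \<sigma> e \<and> f = e)" for f
  have sub: "incident E x \<subseteq> E" unfolding incident_def by auto
  have "(\<Sum>\<eta>\<in>edge_configs E. weight E p (\<eta>, \<sigma>) * rate E p (\<eta>, \<sigma>) (flipE \<eta> e, flipS \<sigma> x))
      = 1/4 * (if agree \<sigma> e then 1 - p else p)
          * (\<Sum>\<eta>\<in>edge_configs E. weight E p (\<eta>, \<sigma>) * ind (\<forall>f\<in>incident E x. \<eta> f = b f))"
    unfolding weight_mult_rate_flip_spin[OF graph e spins] b_def
    by (auto simp: sum_distrib_left intro!: sum.cong)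
  also have "(\<Sum>\<eta>\<in>edge_configs E. weight E p (\<eta>, \<sigma>) * ind (\<forall>f\<in>incident E x. \<eta> f = b f))
      = (\<Prod>f\<in>incident E x. bond_weight p \<sigma> f (b f)) * R"
    unfolding weight_eq_prod R_def bond_mass_def by (rule sum_edge_configs_prod_fixed[OF finite sub])
  also have "(\<Prod>f\<in>incident E x. bond_weight p \<sigma> f (b f))
      = (if agree \<sigma> e then p else 1 - p) * (1 - p) ^ (card (incident E x) - 1)"
  proof -
    have "(\<Prod>f\<in>incident E x - {e}. bond_weight p \<sigma> f (b f)) = (1 - p) ^ (card (incident E x) - 1)"
      by (simp add: b_def bond_weight_def e)
    then show ?thesis
      using e by (simp add: prod.remove b_def bond_weight_def)
  qed
  moreover obtain d where "card (incident E x) = Suc d"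
    using e card_gt_0_iff[of "incident E x"] gr0_implies_Suc by auto
  ultimately show ?thesis
    by (cases "agree \<sigma> e") (simp_all add: R_def algebra_simps)
qed

lemma sum_rate_flip_spin_eq:
  fixes E :: "'v::finite set set"
  assumes spins: "\<forall>v. \<sigma> v \<noteq> 0"
  shows "(\<Sum>\<eta>'\<in>UNIV. rate E p (\<eta>, \<sigma>) (\<eta>', flipS \<sigma> x))
       = (\<Sum>e\<in>incident E x. rate E p (\<eta>, \<sigma>) (flipE \<eta> e, flipS \<sigma> x))"
proof -
  have "rate E p (\<eta>, \<sigma>) (\<eta>', flipS \<sigma> x) = 0" if "\<eta>' \<notin> flipE \<eta> ` incident E x" for \<eta>'
  proof (rule ccontr)
    assume "rate E p (\<eta>, \<sigma>) (\<eta>', flipS \<sigma> x) \<noteq> 0"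
    then have "adjacent E (\<eta>, \<sigma>) (\<eta>', flipS \<sigma> x)"
      by (rule rate_nonzero_imp_adjacent)
    with that flipS_neq[of \<sigma> x] flipS_inject[of \<sigma> x] spins show False
      unfolding adjacent_def by auto
  qed
  then have "(\<Sum>\<eta>'\<in>UNIV. rate E p (\<eta>, \<sigma>) (\<eta>', flipS \<sigma> x))
      = (\<Sum>\<eta>'\<in>flipE \<eta> ` incident E x. rate E p (\<eta>, \<sigma>) (\<eta>', flipS \<sigma> x))"
    by (intro sum.mono_neutral_right) auto
  also have "\<dots> = (\<Sum>e\<in>incident E x. rate E p (\<eta>, \<sigma>) (flipE \<eta> e, flipS \<sigma> x))"
    by (subst sum.reindex) (auto simp: inj_on_def)
  finally show ?thesis .
qed

lemma sum_weight_edge_configs: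
  fixes E :: "'v::finite set set"
  shows "(\<Sum>\<eta>\<in>edge_configs E. weight E p (\<eta>, \<sigma>))
       = (\<Prod>f\<in>E. bond_mass p \<sigma> f)"
  unfolding weight_eq_prod bond_mass_def by (rule sum_edge_configs_prod) simp

lemma prod_bond_mass_incident:
  "finite (incident E x) \<Longrightarrow>
   (\<Prod>f\<in>incident E x. bond_mass p \<sigma> f)
     = (1 - p) ^ (card (incident E x) - card {e \<in> incident E x. agree \<sigma> e})"
proof -
  assume fin: "finite (incident E x)"
  have "(\<Prod>f\<in>incident E x. bond_mass p \<sigma> f)
      = (\<Prod>f\<in>incident E x - {e \<in> incident E x. agree \<sigma> e}. 1 - p)"
    using fin by (intro prod.mono_neutral_cong_right) (auto simp: bond_mass_def bond_weight_def)
  then show ?thesis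
    using fin by (simp add: card_Diff_subset)
qed

lemma IP_spin_eq:
  assumes "\<forall>v. \<sigma> v = 1 \<or> \<sigma> v = -1"
  shows "IP E p (\<eta>, \<sigma>)
       = (if \<eta> \<in> edge_configs E then weight E p (\<eta>, \<sigma>) / (\<Sum>d\<in>states E. weight E p d) else 0)"
  using assms unfolding IP_def states_def edge_configs_def by simp

lemma sum_IP_spin_config:
  fixes E :: "'v::finite set set"
  assumes spins: "\<forall>v. \<sigma> v = 1 \<or> \<sigma> v = -1"
  shows "(\<Sum>\<eta>\<in>UNIV. IP E p (\<eta>, \<sigma>))
       = (1 - p) ^ (card (incident E x) - card {e \<in> incident E x. agree \<sigma> e})
         * (\<Prod>f\<in>E - incident E x. bond_mass p \<sigma> f) / (\<Sum>d\<in>states E. weight E p d)"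
proof -
  have sub: "incident E x \<subseteq> E" unfolding incident_def by auto
  have "(\<Sum>\<eta>\<in>UNIV. IP E p (\<eta>, \<sigma>))
      = (\<Sum>\<eta>\<in>edge_configs E. weight E p (\<eta>, \<sigma>)) / (\<Sum>d\<in>states E. weight E p d)"
    by (simp add: IP_spin_eq[OF spins] sum.inter_restrict[symmetric] sum_divide_distrib)
  then show ?thesis
    unfolding sum_weight_edge_configs prod.subset_diff[OF sub finite] prod_bond_mass_incident[OF finite]
    by (simp add: mult.commute)
qed

lemma sum_IP_mult_Qgen_flip_spin:
  fixes E :: "'v::finite set set"
  assumes graph: "simple_graph E" and spins: "\<forall>v. \<sigma> v = 1 \<or> \<sigma> v = -1"
  shows "(\<Sum>\<eta>\<in>UNIV. \<Sum>\<eta>'\<in>UNIV. IP E p (\<eta>, \<sigma>) * Qgen E p (\<eta>, \<sigma>) (\<eta>', flipS \<sigma> x))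
       = card (incident E x) * (1/4 * p * (1 - p) ^ card (incident E x)
           * (\<Prod>f\<in>E - incident E x. bond_mass p \<sigma> f)) / (\<Sum>d\<in>states E. weight E p d)"
proof -
  define Z where "Z = (\<Sum>d\<in>states E. weight E p d)"
  have spins0: "\<forall>v. \<sigma> v \<noteq> 0" using spins by (metis zero_neq_neg_one zero_neq_one)
  have out_flow: "(\<Sum>\<eta>'\<in>UNIV. IP E p (\<eta>, \<sigma>) * Qgen E p (\<eta>, \<sigma>) (\<eta>', flipS \<sigma> x))
      = IP E p (\<eta>, \<sigma>) * (\<Sum>e\<in>incident E x. rate E p (\<eta>, \<sigma>) (flipE \<eta> e, flipS \<sigma> x))" for \<eta>
    using flipS_neq[of \<sigma> x] spins0
    by (simp add: Qgen_def sum_distrib_left[symmetric] sum_rate_flip_spin_eq[OF spins0])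
  have "(\<Sum>\<eta>\<in>UNIV. \<Sum>\<eta>'\<in>UNIV. IP E p (\<eta>, \<sigma>) * Qgen E p (\<eta>, \<sigma>) (\<eta>', flipS \<sigma> x))
      = (\<Sum>\<eta>\<in>edge_configs E. weight E p (\<eta>, \<sigma>) / Z
           * (\<Sum>e\<in>incident E x. rate E p (\<eta>, \<sigma>) (flipE \<eta> e, flipS \<sigma> x)))"
    unfolding out_flow Z_def
    by (simp add: IP_spin_eq[OF spins] sum.inter_restrict[symmetric] if_distrib[of "\<lambda>y. y * _"]
        cong: if_cong)
  also have "\<dots> = (\<Sum>e\<in>incident E x. \<Sum>\<eta>\<in>edge_configs E.
           weight E p (\<eta>, \<sigma>) * rate E p (\<eta>, \<sigma>) (flipE \<eta> e, flipS \<sigma> x)) / Z"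
    by (subst sum.swap) (simp add: sum_distrib_left sum_divide_distrib)
  finally show ?thesis
    unfolding Z_def by (simp add: sum_weight_mult_rate_flip_spin[OF graph _ spins])
qed

lemma spin_flip_flow_ratio:
  fixes E :: "'v::finite set set"
  assumes graph: "simple_graph E" and spins: "\<forall>v. \<sigma> v = 1 \<or> \<sigma> v = -1"
    and pos: "0 < (\<Sum>\<eta>\<in>UNIV. IP E p (\<eta>, \<sigma>))"
  shows "(\<Sum>\<eta>\<in>UNIV. \<Sum>\<eta>'\<in>UNIV. IP E p (\<eta>, \<sigma>) * Qgen E p (\<eta>, \<sigma>) (\<eta>', flipS \<sigma> x))
          / (\<Sum>\<eta>\<in>UNIV. IP E p (\<eta>, \<sigma>))
       = 1/4 * real (card (incident E x)) * p * (1 - p) ^ card {e \<in> incident E x. agree \<sigma> e}"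
proof -
  define d where "d = card (incident E x)"
  define k where "k = card {e \<in> incident E x. agree \<sigma> e}"
  define a where "a = (1 - p) ^ (d - k)"
  define R where "R = (\<Prod>f\<in>E - incident E x. bond_mass p \<sigma> f)"
  define Z where "Z = (\<Sum>d\<in>states E. weight E p d)"
  have denominator: "(\<Sum>\<eta>\<in>UNIV. IP E p (\<eta>, \<sigma>)) = a * R / Z"
    unfolding a_def d_def k_def R_def Z_def by (rule sum_IP_spin_config[OF spins])
  have "k \<le> d" unfolding k_def d_def by (intro card_mono) auto
  then have "(1 - p) ^ d = (1 - p) ^ k * a"
    unfolding a_def by (simp add: power_add[symmetric])
  moreover have "a * R / Z \<noteq> 0"
    using pos denominator by (metis less_irrefl)
  ultimately show ?thesis
    unfolding sum_IP_mult_Qgen_flip_spin[OF graph spins] denominator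
      d_def[symmetric] k_def[symmetric] R_def[symmetric] Z_def[symmetric]
    by (simp add: field_simps)
qed

lemma sum_IP_states:
  fixes E :: "'v::finite set set"
  assumes "0 \<le> p" "p \<le> 1"
  shows "(\<Sum>c\<in>states E. IP E p c) = 1"
proof -
  define Z where "Z = (\<Sum>d\<in>states E. weight E p d)"
  have nonneg: "0 \<le> weight E p d" for d
    unfolding weight_def using assms by (intro prod_nonneg) auto
  text \<open>Under a constant spin configuration every edge agrees, so the edge weights sum to \<open>1\<close>.\<close>
  have "1 = (\<Sum>\<eta>\<in>edge_configs E. weight E p (\<eta>, \<lambda>_. 1))"
    unfolding sum_weight_edge_configs by (simp add: bond_mass_def bond_weight_def agree_def)
  also have "\<dots> = (\<Sum>d\<in>(\<lambda>\<eta>. (\<eta>, \<lambda>_. 1)) ` edge_configs E. weight E p d)"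
    by (subst sum.reindex) (auto simp: inj_on_def)
  also have "\<dots> \<le> Z"
    unfolding Z_def using nonneg
    by (intro sum_mono2 finite_states) (auto simp: states_def edge_configs_def)
  finally have "Z \<noteq> 0" by simp
  moreover have "(\<Sum>c\<in>states E. IP E p c) = (\<Sum>c\<in>states E. weight E p c) / Z"
    unfolding IP_def Z_def sum_divide_distrib by (intro sum.cong) auto
  ultimately show ?thesis by (simp add: Z_def)
qed

section \<open>The process started in IP\<close>

locale IP_markov_process = prob_space M
  for M :: "'m measure" +
  fixes E :: "'v::finite set set" and p :: real and X :: "real \<Rightarrow> 'm \<Rightarrow> 'v config"
  assumes graph: "simple_graph E" and p0: "0 \<le> p" and p1: "p \<le> 1"
    and meas: "\<forall>t\<ge>0. X t \<in> measurable M (count_space UNIV)"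
    and fdd: "\<forall>(n::nat) (t::nat \<Rightarrow> real) (a::nat \<Rightarrow> 'v config).
               t 0 = 0 \<and> (\<forall>i<n. t i \<le> t (Suc i)) \<longrightarrow>
               measure M {\<omega> \<in> space M. \<forall>i\<le>n. X (t i) \<omega> = a i}
                 = IP E p (a 0) * (\<Prod>i<n. Pt E p (t (Suc i) - t i) (a i) (a (Suc i)))"
begin

lemma events_X: "0 \<le> u \<Longrightarrow> {\<omega> \<in> space M. P (X u \<omega>)} \<in> events"
  using measurable_sets[of "X u" M "count_space UNIV" "{z. P z}"] meas
  by (simp add: vimage_def Int_def conj_commute)

lemma prob_X0_eq: "prob {\<omega> \<in> space M. X 0 \<omega> = a} = IP E p a"
  using fdd[rule_format, of "\<lambda>_. 0" 0 "\<lambda>_. a"] by simp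

lemma prob_X0_X_eq:
  assumes "0 \<le> u"
  shows "prob {\<omega> \<in> space M. X 0 \<omega> = a \<and> X u \<omega> = c} = IP E p a * Pt E p u a c"
  using fdd[rule_format, of "\<lambda>i. if i = 0 then 0 else u" 1 "\<lambda>i. if i = 0 then a else c"] assms
  by (simp add: le_Suc_eq all_conj_distrib)

lemma prob_X0_X_X_eq:
  assumes "0 \<le> u" "0 \<le> v"
  shows "prob {\<omega> \<in> space M. X 0 \<omega> = a \<and> X u \<omega> = c \<and> X (u + v) \<omega> = c'}
       = IP E p a * (Pt E p u a c * Pt E p v c c')"
  using fdd[rule_format, of "\<lambda>i. if i = 0 then 0 else if i = 1 then u else u + v" 2
      "\<lambda>i. if i = 0 then a else if i = 1 then c else c'"] assms
  by (simp add: le_Suc_eq numeral_2_eq_2 less_Suc_eq all_conj_distrib)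

lemma AE_X0_states: "AE \<omega> in M. X 0 \<omega> \<in> states E"
proof -
  have "prob {\<omega> \<in> space M. X 0 \<omega> \<in> states E} = (\<Sum>a\<in>states E. prob {\<omega> \<in> space M. X 0 \<omega> = a})"
    by (intro prob_sum finite_states events_X AE_I2) auto
  also have "\<dots> = 1"
    unfolding prob_X0_eq by (rule sum_IP_states[OF p0 p1])
  finally have "AE \<omega> in M. \<omega> \<in> {\<omega> \<in> space M. X 0 \<omega> \<in> states E}"
    by (rule AE_prob_1)
  then show ?thesis
    by eventually_elim simp
qed

lemma prob_eq_sum_X0:
  assumes "{\<omega> \<in> space M. Q \<omega>} \<in> events"
  shows "prob {\<omega> \<in> space M. Q \<omega>} = (\<Sum>a\<in>states E. prob {\<omega> \<in> space M. X 0 \<omega> = a \<and> Q \<omega>})"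
proof (rule prob_sum)
  show "{\<omega> \<in> space M. X 0 \<omega> = a \<and> Q \<omega>} \<in> events" for a
    by (intro sets.sets_Collect_conj assms events_X) simp
  show "AE \<omega> in M. (\<forall>a\<in>states E. X 0 \<omega> = a \<and> Q \<omega> \<longrightarrow> Q \<omega>)
      \<and> (Q \<omega> \<longrightarrow> (\<exists>!a\<in>states E. X 0 \<omega> = a \<and> Q \<omega>))"
    using AE_X0_states by eventually_elim auto
  show "finite (states E)" by (rule finite_states)
  show "{\<omega> \<in> space M. Q \<omega>} \<in> events" by (rule assms)
qed

lemma prob_X_eq:
  assumes "0 \<le> u"
  shows "prob {\<omega> \<in> space M. X u \<omega> = c} = IP E p c"
proof -
  have "prob {\<omega> \<in> space M. X u \<omega> = c} = (\<Sum>a\<in>states E. IP E p a * Pt E p u a c)"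
    using assms by (subst prob_eq_sum_X0) (auto simp: prob_X0_X_eq intro: events_X)
  also have "\<dots> = IP E p c"
    by (rule IP_Pt_stationary[OF graph p0 p1])
  finally show ?thesis .
qed

lemma prob_X_X_eq:
  assumes "0 \<le> u" "0 \<le> v"
  shows "prob {\<omega> \<in> space M. X u \<omega> = c \<and> X (u + v) \<omega> = c'} = IP E p c * Pt E p v c c'"
proof -
  have "{\<omega> \<in> space M. X u \<omega> = c \<and> X (u + v) \<omega> = c'} \<in> events"
    using assms by (intro sets.sets_Collect_conj events_X) simp_all
  then have "prob {\<omega> \<in> space M. X u \<omega> = c \<and> X (u + v) \<omega> = c'}
      = (\<Sum>a\<in>states E. IP E p a * Pt E p u a c) * Pt E p v c c'"
    using assms by (subst prob_eq_sum_X0) (auto simp: prob_X0_X_X_eq sum_distrib_right mult.assoc)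
  also have "\<dots> = IP E p c * Pt E p v c c'"
    by (simp add: IP_Pt_stationary[OF graph p0 p1])
  finally show ?thesis .
qed

lemma prob_spin_eq:
  assumes "0 \<le> u"
  shows "prob {\<omega> \<in> space M. snd (X u \<omega>) = \<sigma>} = (\<Sum>\<eta>\<in>UNIV. IP E p (\<eta>, \<sigma>))"
proof -
  have "prob {\<omega> \<in> space M. snd (X u \<omega>) = \<sigma>} = (\<Sum>\<eta>\<in>UNIV. prob {\<omega> \<in> space M. X u \<omega> = (\<eta>, \<sigma>)})"
    using assms by (intro prob_sum events_X AE_I2) (auto simp: prod_eq_iff)
  then show ?thesis
    using assms by (simp add: prob_X_eq)
qed

lemma prob_spin_pair_eq:
  assumes "0 \<le> s" "0 \<le> t"
  shows "prob {\<omega> \<in> space M. snd (X (t + s) \<omega>) = \<sigma>' \<and> snd (X s \<omega>) = \<sigma>}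
       = (\<Sum>\<eta>\<in>UNIV. \<Sum>\<eta>'\<in>UNIV. IP E p (\<eta>, \<sigma>) * Pt E p t (\<eta>, \<sigma>) (\<eta>', \<sigma>'))"
proof -
  have "prob {\<omega> \<in> space M. snd (X (t + s) \<omega>) = \<sigma>' \<and> snd (X s \<omega>) = \<sigma>}
      = (\<Sum>q\<in>UNIV. prob {\<omega> \<in> space M. X s \<omega> = (fst q, \<sigma>) \<and> X (s + t) \<omega> = (snd q, \<sigma>')})"
    using assms by (intro prob_sum sets.sets_Collect_conj events_X AE_I2)
      (auto simp: prod_eq_iff add.commute)
  also have "\<dots> = (\<Sum>q\<in>UNIV. IP E p (fst q, \<sigma>) * Pt E p t (fst q, \<sigma>) (snd q, \<sigma>'))"
    using assms by (simp add: prob_X_X_eq)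
  finally show ?thesis
    by (simp add: sum.cartesian_product' UNIV_Times_UNIV[symmetric] del: UNIV_Times_UNIV)
qed

lemma spin_transition_tendsto:
  assumes s: "0 \<le> s" and flip: "\<sigma>' \<noteq> \<sigma>"
    and pos: "0 < prob {\<omega> \<in> space M. snd (X s \<omega>) = \<sigma>}"
  shows "((\<lambda>t. prob {\<omega> \<in> space M. snd (X (t + s) \<omega>) = \<sigma>' \<and> snd (X s \<omega>) = \<sigma>}
                / prob {\<omega> \<in> space M. snd (X s \<omega>) = \<sigma>} / t)
          \<longlongrightarrow> (\<Sum>\<eta>\<in>UNIV. \<Sum>\<eta>'\<in>UNIV. IP E p (\<eta>, \<sigma>) * Qgen E p (\<eta>, \<sigma>) (\<eta>', \<sigma>'))
              / (\<Sum>\<eta>\<in>UNIV. IP E p (\<eta>, \<sigma>))) (at_right 0)"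
proof -
  define D where "D = (\<Sum>\<eta>\<in>UNIV. IP E p (\<eta>, \<sigma>))"
  have D: "prob {\<omega> \<in> space M. snd (X s \<omega>) = \<sigma>} = D"
    unfolding D_def by (rule prob_spin_eq[OF s])
  have "((\<lambda>t. (\<Sum>\<eta>\<in>UNIV. \<Sum>\<eta>'\<in>UNIV. IP E p (\<eta>, \<sigma>) * (Pt E p t (\<eta>, \<sigma>) (\<eta>', \<sigma>') / t)) / D)
      \<longlongrightarrow> (\<Sum>\<eta>\<in>UNIV. \<Sum>\<eta>'\<in>UNIV. IP E p (\<eta>, \<sigma>) * Qpow E p 1 (\<eta>, \<sigma>) (\<eta>', \<sigma>')) / D) (at 0)"
    using flip pos D
    by (intro tendsto_intros Pt_div_tendsto[OF p0 p1]) auto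
  then have lim: "((\<lambda>t. (\<Sum>\<eta>\<in>UNIV. \<Sum>\<eta>'\<in>UNIV. IP E p (\<eta>, \<sigma>) * (Pt E p t (\<eta>, \<sigma>) (\<eta>', \<sigma>') / t)) / D)
      \<longlongrightarrow> (\<Sum>\<eta>\<in>UNIV. \<Sum>\<eta>'\<in>UNIV. IP E p (\<eta>, \<sigma>) * Qgen E p (\<eta>, \<sigma>) (\<eta>', \<sigma>')) / D) (at_right 0)"
    unfolding IP_mult_Qpow_1 by (rule filterlim_mono[OF _ order_refl at_le]) simp
  have ev: "\<forall>\<^sub>F t in at_right 0.
      (\<Sum>\<eta>\<in>UNIV. \<Sum>\<eta>'\<in>UNIV. IP E p (\<eta>, \<sigma>) * (Pt E p t (\<eta>, \<sigma>) (\<eta>', \<sigma>') / t)) / D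
      = prob {\<omega> \<in> space M. snd (X (t + s) \<omega>) = \<sigma>' \<and> snd (X s \<omega>) = \<sigma>}
          / prob {\<omega> \<in> space M. snd (X s \<omega>) = \<sigma>} / t"
    using eventually_at_right_less[of "0::real"]
    by eventually_elim
      (simp add: D prob_spin_pair_eq[OF s] sum_divide_distrib mult.commute)
  show ?thesis
    using tendsto_cong[THEN iffD1, OF ev lim] unfolding D_def .
qed

end

theorem proposition9:
  fixes E :: "'v::finite set set" and p :: real and M :: "'m measure"
    and X :: "real \<Rightarrow> 'm \<Rightarrow> 'v config"
    and x :: 'v and \<sigma> :: "'v \<Rightarrow> int" and s :: real
  assumes graph: "simple_graph E"
    and p0: "0 \<le> p" and p1: "p \<le> 1"
    and M: "prob_space M"
    and meas: "\<forall>t\<ge>0. X t \<in> measurable M (count_space UNIV)"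
    and fdd: "\<forall>(n::nat) (t::nat \<Rightarrow> real) (a::nat \<Rightarrow> 'v config).
               t 0 = 0 \<and> (\<forall>i<n. t i \<le> t (Suc i)) \<longrightarrow>
               measure M {\<omega> \<in> space M. \<forall>i\<le>n. X (t i) \<omega> = a i}
                 = IP E p (a 0) * (\<Prod>i<n. Pt E p (t (Suc i) - t i) (a i) (a (Suc i)))"
    and spins: "\<forall>v. \<sigma> v = 1 \<or> \<sigma> v = -1"
    and s: "s \<ge> 0"
    and pos: "measure M {\<omega> \<in> space M. snd (X s \<omega>) = \<sigma>} > 0"
  shows "((\<lambda>t. measure M {\<omega> \<in> space M. snd (X (t + s) \<omega>) = flipS \<sigma> x \<and> snd (X s \<omega>) = \<sigma>}
                / measure M {\<omega> \<in> space M. snd (X s \<omega>) = \<sigma>} / t)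
          \<longlongrightarrow> 1/4 * real (card (incident E x)) * p * (1 - p) ^ card {e \<in> incident E x. agree \<sigma> e})
         (at_right 0)"
proof -
  interpret IP_markov_process M E p X
    using M graph p0 p1 meas fdd by (simp add: IP_markov_process_def IP_markov_process_axioms_def)
  have flip: "flipS \<sigma> x \<noteq> \<sigma>"
    using spins by (intro flipS_neq) (metis zero_neq_neg_one zero_neq_one)
  have "0 < (\<Sum>\<eta>\<in>UNIV. IP E p (\<eta>, \<sigma>))"
    using pos prob_spin_eq[OF s] by simp
  then show ?thesis
    using spin_transition_tendsto[OF s flip pos] spin_flip_flow_ratio[OF graph spins] by simp
qed

end
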